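(* Let $H$ be a weak Hopf algebra and $A$ a symmetric partial $H$-module algebra. Then the map $\pi\colon H\to\mathrm{End}_\Bbbk(A)$ given by $\pi(h)(a)=h\cdot a$ is a partial representation of $H$ in the algebra $\mathrm{End}_\Bbbk(A)$.
   Context: All algebras are associative and unital over a field $\Bbbk$; Sweedler notation $\Delta(h)=h_1\otimes h_2$, $\Delta(1_H)=1_1\otimes1_2$. A weak Hopf algebra is $(H,m,u,\Delta,\varepsilon,S)$ with $H$ an algebra, $(H,\Delta,\varepsilon)$ a coalgebra, and for all $g,h,k$: $\Delta(kh)=\Delta(k)\Delta(h)$; $\varepsilon(kh_1)\varepsilon(h_2g)=\varepsilon(khg)=\varepsilon(kh_2)\varepsilon(h_1g)$; $(1\otimes\Delta(1))(\Delta(1)\otimes1)=\Delta^2(1)=(\Delta(1)\otimes1)(1\otimes\Delta(1))$; $h_1S(h_2)=\varepsilon(1_1h)1_2$; $S(h_1)h_2=1_1\varepsilon(h1_2)$; $S(h)=S(h_1)h_2S(h_3)$. Symmetric partial $H$-module algebra: algebra $A$ with linear $h\otimes a\mapsto h\cdot a$ such that $h\cdot(ab)=(h_1\cdot a)(h_2\cdot b)$, $1_H\cdot a=a$, $h\cdot(k\cdot a)=(h_1\cdot1_A)((h_2k)\cdot a)$ and $h\cdot(k\cdot a)=((h_1k)\cdot a)(h_2\cdot1_A)$. A partial representation of $H$ in an algebra $B$ is a linear $\pi\colon H\to B$ with, for all $h,k$: (PR1) $\pi(1_H)=1_B$; (PR2) $\pi(h)\pi(k_1)\pi(S(k_2))=\pi(hk_1)\pi(S(k_2))$;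 (PR3) $\pi(h)\pi(S(k_1))\pi(k_2)=\pi(hS(k_1))\pi(k_2)$; (PR4) $\pi(h_1)\pi(S(h_2))\pi(k)=\pi(h_1)\pi(S(h_2)k)$; (PR5) $\pi(S(h_1))\pi(h_2)\pi(k)=\pi(S(h_1))\pi(h_2k)$; (PR6) $\pi(h)=\pi(h_1)\pi(S(h_2))\pi(h_3)$. *)

theory Defs
  imports Complex_Main
begin

text \<open>
  A comultiplication is given by a function delta :: 'h => ('h * 'h) list,
  delta h = [(h1_i, h2_i)] meaning Delta(h) = sum_i h1_i (x) h2_i.
  Since over a field the bilinear (resp. trilinear) forms separate the points of
  H (x) H (resp. H (x) H (x) H), two such representatives denote the same tensor
  iff all bilinear (resp. trilinear) forms agree on them.
\<close>

definition k_algebra :: "('k::field \<Rightarrow> 'h::ring_1 \<Rightarrow> 'h) \<Rightarrow> bool" where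
  "k_algebra sc \<longleftrightarrow> Vector_Spaces.vector_space sc \<and>
     (\<forall>c x y. sc c (x * y) = sc c x * y \<and> sc c (x * y) = x * sc c y)"

definition bilinear_form :: "('k::field \<Rightarrow> 'h::ab_group_add \<Rightarrow> 'h) \<Rightarrow> ('h \<Rightarrow> 'h \<Rightarrow> 'k) \<Rightarrow> bool" where
  "bilinear_form sc \<beta> \<longleftrightarrow>
     (\<forall>y. Vector_Spaces.linear sc (*) (\<lambda>x. \<beta> x y)) \<and> (\<forall>x. Vector_Spaces.linear sc (*) (\<lambda>y. \<beta> x y))"

definition trilinear_form :: "('k::field \<Rightarrow> 'h::ab_group_add \<Rightarrow> 'h) \<Rightarrow> ('h \<Rightarrow> 'h \<Rightarrow> 'h \<Rightarrow> 'k) \<Rightarrow> bool" where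
  "trilinear_form sc \<tau> \<longleftrightarrow>
     (\<forall>y z. Vector_Spaces.linear sc (*) (\<lambda>x. \<tau> x y z)) \<and> (\<forall>x z. Vector_Spaces.linear sc (*) (\<lambda>y. \<tau> x y z)) \<and>
     (\<forall>x y. Vector_Spaces.linear sc (*) (\<lambda>z. \<tau> x y z))"

definition teq2 :: "('k::field \<Rightarrow> 'h::ab_group_add \<Rightarrow> 'h) \<Rightarrow> ('h \<times> 'h) list \<Rightarrow> ('h \<times> 'h) list \<Rightarrow> bool" where
  "teq2 sc L M \<longleftrightarrow> (\<forall>\<beta>. bilinear_form sc \<beta> \<longrightarrow>
      (\<Sum>(a, b)\<leftarrow>L. \<beta> a b) = (\<Sum>(a, b)\<leftarrow>M. \<beta> a b))"

definition teq3 :: "('k::field \<Rightarrow> 'h::ab_group_add \<Rightarrow> 'h) \<Rightarrow> ('h \<times> 'h \<times> 'h) list \<Rightarrow> ('h \<times> 'h \<times> 'h) list \<Rightarrow> bool" where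
  "teq3 sc L M \<longleftrightarrow> (\<forall>\<tau>. trilinear_form sc \<tau> \<longrightarrow>
      (\<Sum>(a, b, c)\<leftarrow>L. \<tau> a b c) = (\<Sum>(a, b, c)\<leftarrow>M. \<tau> a b c))"

definition tmul2 :: "('h::times \<times> 'h) list \<Rightarrow> ('h \<times> 'h) list \<Rightarrow> ('h \<times> 'h) list" where
  "tmul2 L M = concat (map (\<lambda>(a, b). map (\<lambda>(c, d). (a * c, b * d)) M) L)"

definition tmul3 :: "('h::times \<times> 'h \<times> 'h) list \<Rightarrow> ('h \<times> 'h \<times> 'h) list \<Rightarrow> ('h \<times> 'h \<times> 'h) list" where
  "tmul3 L M = concat (map (\<lambda>(a, b, c). map (\<lambda>(d, e, f). (a * d, b * e, c * f)) M) L)"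

text \<open>(Delta (x) id) Delta h  and  (id (x) Delta) Delta h.\<close>
definition delta2_left :: "('h \<Rightarrow> ('h \<times> 'h) list) \<Rightarrow> 'h \<Rightarrow> ('h \<times> 'h \<times> 'h) list" where
  "delta2_left \<Delta> h = concat (map (\<lambda>(a, b). map (\<lambda>(c, d). (c, d, b)) (\<Delta> a)) (\<Delta> h))"

definition delta2_right :: "('h \<Rightarrow> ('h \<times> 'h) list) \<Rightarrow> 'h \<Rightarrow> ('h \<times> 'h \<times> 'h) list" where
  "delta2_right \<Delta> h = concat (map (\<lambda>(a, b). map (\<lambda>(c, d). (a, c, d)) (\<Delta> b)) (\<Delta> h))"

definition weak_hopf_algebra ::
  "('k::field \<Rightarrow> 'h::ring_1 \<Rightarrow> 'h) \<Rightarrow> ('h \<Rightarrow> ('h \<times> 'h) list) \<Rightarrow> ('h \<Rightarrow> 'k) \<Rightarrow> ('h \<Rightarrow> 'h) \<Rightarrow> bool" where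
  "weak_hopf_algebra sc \<Delta> \<epsilon> S \<longleftrightarrow>
     k_algebra sc \<and>
     \<comment> \<open>coalgebra: Delta linear, epsilon linear, coassociativity, counit\<close>
     (\<forall>x y. teq2 sc (\<Delta> (x + y)) (\<Delta> x @ \<Delta> y)) \<and>
     (\<forall>c x. teq2 sc (\<Delta> (sc c x)) (map (\<lambda>(a, b). (sc c a, b)) (\<Delta> x))) \<and>
     Vector_Spaces.linear sc (*) \<epsilon> \<and>
     (\<forall>h. teq3 sc (delta2_left \<Delta> h) (delta2_right \<Delta> h)) \<and>
     (\<forall>h. (\<Sum>(a, b)\<leftarrow>\<Delta> h. sc (\<epsilon> a) b) = h) \<and>
     (\<forall>h. (\<Sum>(a, b)\<leftarrow>\<Delta> h. sc (\<epsilon> b) a) = h) \<and>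
     \<comment> \<open>S linear\<close>
     Vector_Spaces.linear sc sc S \<and>
     \<comment> \<open>Delta multiplicative\<close>
     (\<forall>k h. teq2 sc (\<Delta> (k * h)) (tmul2 (\<Delta> k) (\<Delta> h))) \<and>
     \<comment> \<open>weak multiplicativity of the counit\<close>
     (\<forall>k h g. (\<Sum>(a, b)\<leftarrow>\<Delta> h. \<epsilon> (k * a) * \<epsilon> (b * g)) = \<epsilon> (k * h * g)) \<and>
     (\<forall>k h g. (\<Sum>(a, b)\<leftarrow>\<Delta> h. \<epsilon> (k * b) * \<epsilon> (a * g)) = \<epsilon> (k * h * g)) \<and>
     \<comment> \<open>weak comultiplicativity of the unit\<close>
     teq3 sc (tmul3 (map (\<lambda>(a, b). (1, a, b)) (\<Delta> 1)) (map (\<lambda>(a, b). (a, b, 1)) (\<Delta> 1)))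
             (delta2_left \<Delta> 1) \<and>
     teq3 sc (tmul3 (map (\<lambda>(a, b). (a, b, 1)) (\<Delta> 1)) (map (\<lambda>(a, b). (1, a, b)) (\<Delta> 1)))
             (delta2_left \<Delta> 1) \<and>
     \<comment> \<open>antipode axioms\<close>
     (\<forall>h. (\<Sum>(a, b)\<leftarrow>\<Delta> h. a * S b) = (\<Sum>(a, b)\<leftarrow>\<Delta> 1. sc (\<epsilon> (a * h)) b)) \<and>
     (\<forall>h. (\<Sum>(a, b)\<leftarrow>\<Delta> h. S a * b) = (\<Sum>(a, b)\<leftarrow>\<Delta> 1. sc (\<epsilon> (h * b)) a)) \<and>
     (\<forall>h. S h = (\<Sum>(a, b, c)\<leftarrow>delta2_left \<Delta> h. S a * b * S c))"

definition symmetric_partial_module_algebra ::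
  "('k::field \<Rightarrow> 'h::ring_1 \<Rightarrow> 'h) \<Rightarrow> ('h \<Rightarrow> ('h \<times> 'h) list) \<Rightarrow>
   ('k \<Rightarrow> 'a::ring_1 \<Rightarrow> 'a) \<Rightarrow> ('h \<Rightarrow> 'a \<Rightarrow> 'a) \<Rightarrow> bool" where
  "symmetric_partial_module_algebra sc \<Delta> scA act \<longleftrightarrow>
     k_algebra scA \<and>
     (\<forall>h. Vector_Spaces.linear scA scA (act h)) \<and> (\<forall>x. Vector_Spaces.linear sc scA (\<lambda>h. act h x)) \<and>
     (\<forall>h x y. act h (x * y) = (\<Sum>(a, b)\<leftarrow>\<Delta> h. act a x * act b y)) \<and>
     (\<forall>x. act 1 x = x) \<and>
     (\<forall>h k x. act h (act k x) = (\<Sum>(a, b)\<leftarrow>\<Delta> h. act a 1 * act (b * k) x)) \<and>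
     (\<forall>h k x. act h (act k x) = (\<Sum>(a, b)\<leftarrow>\<Delta> h. act (a * k) x * act b 1))"

text \<open>A partial representation of H in the algebra End_k(A) (product = composition),
  with elements of End_k(A) represented as linear functions 'a => 'a; equalities
  of endomorphisms are stated pointwise.\<close>
definition partial_representation_End ::
  "('k::field \<Rightarrow> 'h::ring_1 \<Rightarrow> 'h) \<Rightarrow> ('h \<Rightarrow> ('h \<times> 'h) list) \<Rightarrow> ('h \<Rightarrow> 'h) \<Rightarrow>
   ('k \<Rightarrow> 'a::ring_1 \<Rightarrow> 'a) \<Rightarrow> ('h \<Rightarrow> 'a \<Rightarrow> 'a) \<Rightarrow> bool" where
  "partial_representation_End sc \<Delta> S scA \<pi> \<longleftrightarrow>
     \<comment> \<open>pi is a linear map H -> End_k(A)\<close>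
     (\<forall>h. Vector_Spaces.linear scA scA (\<pi> h)) \<and> (\<forall>x. Vector_Spaces.linear sc scA (\<lambda>h. \<pi> h x)) \<and>
     \<comment> \<open>(PR1)\<close>
     (\<forall>x. \<pi> 1 x = x) \<and>
     \<comment> \<open>(PR2)\<close>
     (\<forall>h k x. (\<Sum>(a, b)\<leftarrow>\<Delta> k. \<pi> h (\<pi> a (\<pi> (S b) x))) = (\<Sum>(a, b)\<leftarrow>\<Delta> k. \<pi> (h * a) (\<pi> (S b) x))) \<and>
     \<comment> \<open>(PR3)\<close>
     (\<forall>h k x. (\<Sum>(a, b)\<leftarrow>\<Delta> k. \<pi> h (\<pi> (S a) (\<pi> b x))) = (\<Sum>(a, b)\<leftarrow>\<Delta> k. \<pi> (h * S a) (\<pi> b x))) \<and>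
     \<comment> \<open>(PR4)\<close>
     (\<forall>h k x. (\<Sum>(a, b)\<leftarrow>\<Delta> h. \<pi> a (\<pi> (S b) (\<pi> k x))) = (\<Sum>(a, b)\<leftarrow>\<Delta> h. \<pi> a (\<pi> (S b * k) x))) \<and>
     \<comment> \<open>(PR5)\<close>
     (\<forall>h k x. (\<Sum>(a, b)\<leftarrow>\<Delta> h. \<pi> (S a) (\<pi> b (\<pi> k x))) = (\<Sum>(a, b)\<leftarrow>\<Delta> h. \<pi> (S a) (\<pi> (b * k) x))) \<and>
     \<comment> \<open>(PR6)\<close>
     (\<forall>h x. \<pi> h x = (\<Sum>(a, b, c)\<leftarrow>delta2_left \<Delta> h. \<pi> a (\<pi> (S b) (\<pi> c x))))"

end

theory Submission
  imports Defs
begin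

text \<open>
  Tensor identities in \<open>H \<otimes> H\<close> and \<open>H \<otimes> H \<otimes> H\<close> are given by testing against \<open>k\<close>-valued
  multilinear forms; since linear functionals separate the points of any vector space, they can be
  evaluated on \<open>A\<close>-valued multilinear maps built from the action. Besides coassociativity and the
  axioms for \<open>\<Delta>(1)\<close>, the argument rests on the weak Hopf identities
  \<open>h\<^sub>1 \<otimes> \<epsilon>\<^sub>t(h\<^sub>2) = 1\<^sub>1 h \<otimes> 1\<^sub>2\<close> and \<open>S(h\<^sub>1)\<^sub>1 h\<^sub>2 \<otimes> S(h\<^sub>1)\<^sub>2 = 1\<^sub>1 \<otimes> 1\<^sub>2 S(h)\<close>.
  Fed into the symmetric partial action axioms they give \<open>h\<^sub>1\<cdot>(S(h\<^sub>2)\<cdot>a) = (h\<cdot>1) a\<close> and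
  \<open>S(h\<^sub>1)\<cdot>(h\<^sub>2\<cdot>a) = (1\<^sub>1\<cdot>a) ((1\<^sub>2 S(h))\<cdot>1)\<close>, from which (PR2)--(PR6) follow by
  rewriting both sides to a common normal form.
\<close>

lemma sum_list_map_concat:
  "(\<Sum>x\<leftarrow>concat (map g xs). f x) = (\<Sum>y\<leftarrow>xs. \<Sum>x\<leftarrow>g y. f x)"
  by (induction xs) auto

lemma sum_list_swap:
  fixes f :: "'x \<Rightarrow> 'y \<Rightarrow> 'c::comm_monoid_add"
  shows "(\<Sum>x\<leftarrow>xs. \<Sum>y\<leftarrow>ys. f x y) = (\<Sum>y\<leftarrow>ys. \<Sum>x\<leftarrow>xs. f x y)"
  by (induction xs) (simp_all add: sum_list_addf)

lemma sum_list_pairs_swap: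
  fixes F :: "'x \<Rightarrow> 'y \<Rightarrow> 'z \<Rightarrow> 'w \<Rightarrow> 'c::comm_monoid_add"
  shows "(\<Sum>(a, b)\<leftarrow>L. \<Sum>(c, d)\<leftarrow>M. F a b c d) = (\<Sum>(c, d)\<leftarrow>M. \<Sum>(a, b)\<leftarrow>L. F a b c d)"
  using sum_list_swap[where f = "\<lambda>x y. case x of (a, b) \<Rightarrow> case y of (c, d) \<Rightarrow> F a b c d" and xs = L and ys = M]
  by (simp add: case_prod_beta')

definition bilinear_map ::
  "('k::field \<Rightarrow> 'h::ab_group_add \<Rightarrow> 'h) \<Rightarrow> ('k \<Rightarrow> 'v::ab_group_add \<Rightarrow> 'v) \<Rightarrow> ('h \<Rightarrow> 'h \<Rightarrow> 'v) \<Rightarrow> bool" where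
  "bilinear_map sc scV F \<longleftrightarrow>
     (\<forall>b. Vector_Spaces.linear sc scV (\<lambda>a. F a b)) \<and> (\<forall>a. Vector_Spaces.linear sc scV (\<lambda>b. F a b))"

definition trilinear_map ::
  "('k::field \<Rightarrow> 'h::ab_group_add \<Rightarrow> 'h) \<Rightarrow> ('k \<Rightarrow> 'v::ab_group_add \<Rightarrow> 'v) \<Rightarrow> ('h \<Rightarrow> 'h \<Rightarrow> 'h \<Rightarrow> 'v) \<Rightarrow> bool" where
  "trilinear_map sc scV F \<longleftrightarrow>
     (\<forall>b c. Vector_Spaces.linear sc scV (\<lambda>a. F a b c)) \<and> (\<forall>a c. Vector_Spaces.linear sc scV (\<lambda>b. F a b c)) \<and>
     (\<forall>a b. Vector_Spaces.linear sc scV (\<lambda>c. F a b c))"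

lemma bilinear_mapI:
  "(\<And>b. Vector_Spaces.linear sc scV (\<lambda>a. F a b)) \<Longrightarrow> (\<And>a. Vector_Spaces.linear sc scV (\<lambda>b. F a b)) \<Longrightarrow>
   bilinear_map sc scV F"
  unfolding bilinear_map_def by blast

lemma trilinear_mapI:
  "(\<And>b c. Vector_Spaces.linear sc scV (\<lambda>a. F a b c)) \<Longrightarrow> (\<And>a c. Vector_Spaces.linear sc scV (\<lambda>b. F a b c)) \<Longrightarrow>
   (\<And>a b. Vector_Spaces.linear sc scV (\<lambda>c. F a b c)) \<Longrightarrow> trilinear_map sc scV F"
  unfolding trilinear_map_def by blast

lemma linear_compose_fun:
  "Vector_Spaces.linear s1 s2 f \<Longrightarrow> Vector_Spaces.linear s2 s3 g \<Longrightarrow> Vector_Spaces.linear s1 s3 (\<lambda>x. g (f x))"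
  using Vector_Spaces.linear_compose[of s1 s2 f s3 g] by (simp add: comp_def)

lemma linear_sum_list:
  assumes "Vector_Spaces.linear s1 s2 f"
  shows "f (\<Sum>x\<leftarrow>xs. g x) = (\<Sum>x\<leftarrow>xs. f (g x))"
proof -
  interpret module_hom s1 s2 f
    using assms by (simp add: linear_iff_module_hom)
  show ?thesis by (induction xs) (simp_all add: add)
qed

lemma linear_sum_list_pairs:
  "Vector_Spaces.linear s1 s2 f \<Longrightarrow> f (\<Sum>(a, b)\<leftarrow>L. g a b) = (\<Sum>(a, b)\<leftarrow>L. f (g a b))"
  by (simp add: linear_sum_list prod.case_distrib)

lemma linear_sum_list_pairs_fun:
  assumes "vector_space s1" "vector_space s2" "\<And>a b. Vector_Spaces.linear s1 s2 (\<lambda>x. F x a b)"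
  shows "Vector_Spaces.linear s1 s2 (\<lambda>x. \<Sum>(a, b)\<leftarrow>L. F x a b)"
proof -
  interpret vector_space s2 by (fact assms(2))
  show ?thesis
    using assms by (induction L) (auto simp: Vector_Spaces.linear_iff scale_right_distrib)
qed

lemma linear_scale_fun:
  "vector_space s2 \<Longrightarrow> Vector_Spaces.linear s1 s2 f \<Longrightarrow> Vector_Spaces.linear s1 s2 (\<lambda>x. s2 c (f x))"
  using linear_compose_fun vector_space.linear_scale_self by blast

lemma bilinear_map_vector_space: "bilinear_map sc scV F \<Longrightarrow> vector_space scV"
  unfolding bilinear_map_def Vector_Spaces.linear_iff by blast

lemma trilinear_map_vector_space: "trilinear_map sc scV F \<Longrightarrow> vector_space scV"
  unfolding trilinear_map_def Vector_Spaces.linear_iff by blast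

lemma bilinear_map_linear_fst:
  "bilinear_map sc scV F \<Longrightarrow> Vector_Spaces.linear sc sc m \<Longrightarrow> Vector_Spaces.linear sc scV (\<lambda>x. F (m x) b)"
  using linear_compose_fun[of sc sc m scV "\<lambda>a. F a b"] unfolding bilinear_map_def by blast

lemma bilinear_map_linear_snd:
  "bilinear_map sc scV F \<Longrightarrow> Vector_Spaces.linear sc sc m \<Longrightarrow> Vector_Spaces.linear sc scV (\<lambda>x. F a (m x))"
  using linear_compose_fun[of sc sc m scV "F a"] unfolding bilinear_map_def by blast

lemma vector_space_field: "vector_space ((*) :: 'k::field \<Rightarrow> 'k \<Rightarrow> 'k)"
  by unfold_locales (auto simp: algebra_simps)

lemma linear_functionals_separate:
  assumes V: "vector_space scV"
    and eq: "\<And>\<phi>. Vector_Spaces.linear scV ((*) :: 'k::field \<Rightarrow> 'k \<Rightarrow> 'k) \<phi> \<Longrightarrow> \<phi> x = \<phi> y"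
  shows "x = y"
proof (rule ccontr)
  interpret vector_space_pair scV "(*) :: 'k \<Rightarrow> 'k \<Rightarrow> 'k"
    using V vector_space_field by (simp add: vector_space_pair_def)
  assume "x \<noteq> y"
  then have "vs1.independent {x - y}" by simp
  then obtain \<phi> where \<phi>: "Vector_Spaces.linear scV (*) \<phi>" and "\<phi> (x - y) = 1"
    using linear_independent_extend[of "{x - y}" "\<lambda>_. 1"] by auto
  then show False using eq[OF \<phi>] by (simp add: linear_diff)
qed

lemma teq2_sum_eq:
  assumes "teq2 sc L M" and F: "bilinear_map sc scV F"
  shows "(\<Sum>(a, b)\<leftarrow>L. F a b) = (\<Sum>(a, b)\<leftarrow>M. F a b)"
proof (rule linear_functionals_separate)
  show "vector_space scV" using F by (rule bilinear_map_vector_space)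
  fix \<phi> assume \<phi>: "Vector_Spaces.linear scV (*) \<phi>"
  have "bilinear_form sc (\<lambda>a b. \<phi> (F a b))"
    using F \<phi> unfolding bilinear_form_def bilinear_map_def by (auto intro: linear_compose_fun[OF _ \<phi>])
  with assms(1) show "\<phi> (\<Sum>(a, b)\<leftarrow>L. F a b) = \<phi> (\<Sum>(a, b)\<leftarrow>M. F a b)"
    unfolding teq2_def by (simp add: linear_sum_list_pairs[OF \<phi>])
qed

lemma teq3_sum_eq:
  assumes "teq3 sc L M" and F: "trilinear_map sc scV F"
  shows "(\<Sum>(a, b, c)\<leftarrow>L. F a b c) = (\<Sum>(a, b, c)\<leftarrow>M. F a b c)"
proof (rule linear_functionals_separate)
  show "vector_space scV" using F by (rule trilinear_map_vector_space)
  fix \<phi> assume \<phi>: "Vector_Spaces.linear scV (*) \<phi>"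
  have "trilinear_form sc (\<lambda>a b c. \<phi> (F a b c))"
    using F \<phi> unfolding trilinear_form_def trilinear_map_def by (auto intro: linear_compose_fun[OF _ \<phi>])
  with assms(1) show "\<phi> (\<Sum>(a, b, c)\<leftarrow>L. F a b c) = \<phi> (\<Sum>(a, b, c)\<leftarrow>M. F a b c)"
    unfolding teq3_def by (simp add: linear_sum_list[OF \<phi>] prod.case_distrib)
qed

locale weak_hopf =
  fixes sc :: "'k::field \<Rightarrow> 'h::ring_1 \<Rightarrow> 'h"
    and \<Delta> :: "'h \<Rightarrow> ('h \<times> 'h) list"
    and \<epsilon> :: "'h \<Rightarrow> 'k"
    and S :: "'h \<Rightarrow> 'h"
  assumes vector_space_H: "vector_space sc"
    and scale_mult_left: "sc c (x * y) = sc c x * y"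
    and scale_mult_right: "sc c (x * y) = x * sc c y"
    and Delta_add: "teq2 sc (\<Delta> (x + y)) (\<Delta> x @ \<Delta> y)"
    and Delta_scale: "teq2 sc (\<Delta> (sc c x)) (map (\<lambda>(a, b). (sc c a, b)) (\<Delta> x))"
    and linear_counit: "Vector_Spaces.linear sc (*) \<epsilon>"
    and coassoc: "teq3 sc (delta2_left \<Delta> h) (delta2_right \<Delta> h)"
    and counit_right: "(\<Sum>(a, b)\<leftarrow>\<Delta> h. sc (\<epsilon> b) a) = h"
    and linear_antipode: "Vector_Spaces.linear sc sc S"
    and Delta_mult: "teq2 sc (\<Delta> (k * h)) (tmul2 (\<Delta> k) (\<Delta> h))"
    and Delta2_one_fst: "teq3 sc (tmul3 (map (\<lambda>(a, b). (1, a, b)) (\<Delta> 1)) (map (\<lambda>(a, b). (a, b, 1)) (\<Delta> 1)))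
                                 (delta2_left \<Delta> 1)"
    and Delta2_one_snd: "teq3 sc (tmul3 (map (\<lambda>(a, b). (a, b, 1)) (\<Delta> 1)) (map (\<lambda>(a, b). (1, a, b)) (\<Delta> 1)))
                                 (delta2_left \<Delta> 1)"
    and antipode_left: "(\<Sum>(a, b)\<leftarrow>\<Delta> h. a * S b) = (\<Sum>(a, b)\<leftarrow>\<Delta> 1. sc (\<epsilon> (a * h)) b)"
    and antipode_right: "(\<Sum>(a, b)\<leftarrow>\<Delta> h. S a * b) = (\<Sum>(a, b)\<leftarrow>\<Delta> 1. sc (\<epsilon> (h * b)) a)"
    and antipode_Delta2: "S h = (\<Sum>(a, b, c)\<leftarrow>delta2_left \<Delta> h. S a * b * S c)"

lemma weak_hopf_algebra_imp_weak_hopf: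
  "weak_hopf_algebra sc \<Delta> \<epsilon> S \<Longrightarrow> weak_hopf sc \<Delta> \<epsilon> S"
  unfolding weak_hopf_algebra_def k_algebra_def weak_hopf_def by (elim conjE) (intro conjI; blast)

context weak_hopf
begin

lemma linear_H_ident: "Vector_Spaces.linear sc sc (\<lambda>h. h)"
  using vector_space.linear_ident[OF vector_space_H] by simp

lemma linear_H_antipode: "Vector_Spaces.linear sc sc m \<Longrightarrow> Vector_Spaces.linear sc sc (\<lambda>h. S (m h))"
  by (rule linear_compose_fun[OF _ linear_antipode])

lemma linear_H_mult_left: "Vector_Spaces.linear sc sc m \<Longrightarrow> Vector_Spaces.linear sc sc (\<lambda>h. c * m h)"
  by (simp add: Vector_Spaces.linear_iff distrib_left scale_mult_right)

lemma linear_H_mult_right: "Vector_Spaces.linear sc sc m \<Longrightarrow> Vector_Spaces.linear sc sc (\<lambda>h. m h * c)"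
  by (simp add: Vector_Spaces.linear_iff distrib_right scale_mult_left)

lemma linear_counit_scale:
  assumes V: "vector_space scV" and m: "Vector_Spaces.linear sc sc m"
  shows "Vector_Spaces.linear sc scV (\<lambda>h. scV (\<epsilon> (m h)) y)"
proof -
  interpret vector_space scV by (fact V)
  show ?thesis
    using V linear_compose_fun[OF m linear_counit]
    by (simp add: Vector_Spaces.linear_iff scale_left_distrib)
qed

lemma linear_Delta_sum:
  assumes F: "bilinear_map sc scV F"
  shows "Vector_Spaces.linear sc scV (\<lambda>h. \<Sum>(a, b)\<leftarrow>\<Delta> h. F a b)"
proof -
  interpret V: vector_space scV using F by (rule bilinear_map_vector_space)
  have "(\<Sum>(a, b)\<leftarrow>\<Delta> (sc c x). F a b) = (\<Sum>(a, b)\<leftarrow>\<Delta> x. F (sc c a) b)" for c x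
    using teq2_sum_eq[OF Delta_scale F] by (simp add: comp_def case_prod_beta')
  also have "\<dots> c x = (\<Sum>(a, b)\<leftarrow>\<Delta> x. scV c (F a b))" for c x
    using F by (simp add: bilinear_map_def Vector_Spaces.linear_iff)
  also have "\<dots> c x = scV c (\<Sum>(a, b)\<leftarrow>\<Delta> x. F a b)" for c x
    by (simp add: linear_sum_list_pairs[OF V.linear_scale_self])
  finally show ?thesis
    using teq2_sum_eq[OF Delta_add F] vector_space_H V.vector_space_axioms
    by (simp add: Vector_Spaces.linear_iff)
qed

lemma linear_Delta_sum_comp:
  "bilinear_map sc scV F \<Longrightarrow> Vector_Spaces.linear sc sc m \<Longrightarrow>
   Vector_Spaces.linear sc scV (\<lambda>h. \<Sum>(a, b)\<leftarrow>\<Delta> (m h). F a b)"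
  using linear_compose_fun[OF _ linear_Delta_sum] by blast

lemmas linear_H_intros = vector_space_H
  linear_H_ident linear_H_antipode linear_H_mult_left linear_H_mult_right
  linear_sum_list_pairs_fun linear_Delta_sum_comp

lemma coassoc_sum:
  "(\<Sum>(a, b)\<leftarrow>\<Delta> h. \<Sum>(c, d)\<leftarrow>\<Delta> a. F c d b) = (\<Sum>(a, b)\<leftarrow>\<Delta> h. \<Sum>(c, d)\<leftarrow>\<Delta> b. F a c d)"
  if "trilinear_map sc scV F"
  using teq3_sum_eq[OF coassoc that]
  by (simp add: delta2_left_def delta2_right_def sum_list_map_concat comp_def case_prod_beta')

lemma Delta_mult_sum:
  "(\<Sum>(a, b)\<leftarrow>\<Delta> (k * h). F a b) = (\<Sum>(a, b)\<leftarrow>\<Delta> k. \<Sum>(c, d)\<leftarrow>\<Delta> h. F (a * c) (b * d))"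
  if "bilinear_map sc scV F"
  using teq2_sum_eq[OF Delta_mult that]
  by (simp add: tmul2_def sum_list_map_concat comp_def case_prod_beta')

lemma Delta2_one_fst_sum:
  "(\<Sum>(a, b)\<leftarrow>\<Delta> 1. \<Sum>(c, d)\<leftarrow>\<Delta> a. F c d b) = (\<Sum>(a, b)\<leftarrow>\<Delta> 1. \<Sum>(c, d)\<leftarrow>\<Delta> 1. F c (a * d) b)"
  if "trilinear_map sc scV F"
  using teq3_sum_eq[OF Delta2_one_fst that]
  by (simp add: tmul3_def delta2_left_def sum_list_map_concat comp_def case_prod_beta')

lemma Delta2_one_snd_sum:
  "(\<Sum>(a, b)\<leftarrow>\<Delta> 1. \<Sum>(c, d)\<leftarrow>\<Delta> a. F c d b) = (\<Sum>(a, b)\<leftarrow>\<Delta> 1. \<Sum>(c, d)\<leftarrow>\<Delta> 1. F a (b * c) d)"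
  if "trilinear_map sc scV F"
  using teq3_sum_eq[OF Delta2_one_snd that]
  by (simp add: tmul3_def delta2_left_def sum_list_map_concat comp_def case_prod_beta')

lemma counit_right_sum:
  assumes f: "Vector_Spaces.linear sc scV f"
  shows "(\<Sum>(a, b)\<leftarrow>\<Delta> h. scV (\<epsilon> b) (f a)) = f h"
  using f linear_sum_list_pairs[OF f, of "\<lambda>a b. sc (\<epsilon> b) a" "\<Delta> h"]
  by (simp add: counit_right Vector_Spaces.linear_iff)

definition target_counit :: "'h \<Rightarrow> 'h" where
  "target_counit h = (\<Sum>(a, b)\<leftarrow>\<Delta> h. a * S b)"

definition source_counit :: "'h \<Rightarrow> 'h" where
  "source_counit h = (\<Sum>(a, b)\<leftarrow>\<Delta> h. S a * b)"

lemma antipode_eq_source_counit_sum: "S h = (\<Sum>(a, b)\<leftarrow>\<Delta> h. source_counit a * S b)"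
proof -
  have "S h = (\<Sum>(a, b)\<leftarrow>\<Delta> h. \<Sum>(c, d)\<leftarrow>\<Delta> a. S c * d * S b)"
    by (subst antipode_Delta2) (simp add: delta2_left_def sum_list_map_concat comp_def case_prod_beta')
  then show ?thesis
    by (simp add: source_counit_def linear_sum_list_pairs[OF linear_H_mult_right[OF linear_H_ident]])
qed

lemma comult_target_counit:
  assumes F: "bilinear_map sc scV F"
  shows "(\<Sum>(a, b)\<leftarrow>\<Delta> h. F a (target_counit b)) = (\<Sum>(a, b)\<leftarrow>\<Delta> 1. F (a * h) b)"
proof -
  interpret V: vector_space scV using F by (rule bilinear_map_vector_space)
  note intros = linear_H_intros V.vector_space_axioms linear_scale_fun[OF V.vector_space_axioms]
    linear_counit_scale[OF V.vector_space_axioms]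
    bilinear_map_linear_fst[OF F] bilinear_map_linear_snd[OF F]
  have F_snd: "Vector_Spaces.linear sc scV (F a)" for a
    using F unfolding bilinear_map_def by blast
  define G where "G a b = (\<Sum>(u, v)\<leftarrow>\<Delta> 1. scV (\<epsilon> (u * b)) (F a v))" for a b
  define E where "E x y z = (\<Sum>(a, b)\<leftarrow>\<Delta> h. scV (\<epsilon> (y * b)) (F (x * a) z))" for x y z
  have "F a (target_counit b) = (\<Sum>(u, v)\<leftarrow>\<Delta> 1. F a (sc (\<epsilon> (u * b)) v))" for a b
    by (simp add: target_counit_def antipode_left linear_sum_list_pairs[OF F_snd])
  also have "\<dots> a b = G a b" for a b
    using F_snd[of a] by (simp add: G_def Vector_Spaces.linear_iff)
  finally have "(\<Sum>(a, b)\<leftarrow>\<Delta> h. F a (target_counit b)) = (\<Sum>(a, b)\<leftarrow>\<Delta> (1 * h). G a b)"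
    by simp
  also have "\<dots> = (\<Sum>(p, q)\<leftarrow>\<Delta> 1. \<Sum>(a, b)\<leftarrow>\<Delta> h. G (p * a) (q * b))"
    by (rule Delta_mult_sum[where scV = scV]) (unfold G_def, intro bilinear_mapI intros)
  also have "\<dots> = (\<Sum>(u, v)\<leftarrow>\<Delta> 1. \<Sum>(p, q)\<leftarrow>\<Delta> 1. E p (u * q) v)"
    unfolding G_def E_def
    by (simp only: sum_list_pairs_swap[where L = "\<Delta> h"]) (subst sum_list_pairs_swap, simp add: mult.assoc)
  also have "\<dots> = (\<Sum>(a, b)\<leftarrow>\<Delta> 1. \<Sum>(c, d)\<leftarrow>\<Delta> a. E c d b)"
    by (rule Delta2_one_fst_sum[where scV = scV, symmetric]) (unfold E_def, intro trilinear_mapI intros)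
  also have "\<dots> = (\<Sum>(a, b)\<leftarrow>\<Delta> 1. \<Sum>(w, z)\<leftarrow>\<Delta> (a * h). scV (\<epsilon> z) (F w b))"
    unfolding E_def by (subst Delta_mult_sum[where scV = scV]) (intro bilinear_mapI intros, simp)
  also have "\<dots> = (\<Sum>(a, b)\<leftarrow>\<Delta> 1. F (a * h) b)"
    by (simp add: counit_right_sum[OF bilinear_map_linear_fst[OF F linear_H_ident]])
  finally show ?thesis .
qed

lemma comult_source_counit:
  assumes F: "bilinear_map sc scV F"
  shows "(\<Sum>(a, b)\<leftarrow>\<Delta> (source_counit h). F a b) = (\<Sum>(a, b)\<leftarrow>\<Delta> 1. F a (b * source_counit h))"
proof -
  interpret V: vector_space scV using F by (rule bilinear_map_vector_space)
  note intros = linear_H_intros V.vector_space_axioms linear_scale_fun[OF V.vector_space_axioms]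
    linear_counit_scale[OF V.vector_space_axioms]
    bilinear_map_linear_fst[OF F] bilinear_map_linear_snd[OF F]
  have F_snd: "Vector_Spaces.linear sc scV (\<lambda>x. F a (b * x))" for a b
    by (intro intros)
  have "(\<Sum>(a, b)\<leftarrow>\<Delta> (source_counit h). F a b)
      = (\<Sum>(u, v)\<leftarrow>\<Delta> 1. \<Sum>(a, b)\<leftarrow>\<Delta> (sc (\<epsilon> (h * v)) u). F a b)"
    by (simp add: source_counit_def antipode_right linear_sum_list_pairs[OF linear_Delta_sum[OF F]])
  also have "\<dots> = (\<Sum>(u, v)\<leftarrow>\<Delta> 1. scV (\<epsilon> (h * v)) (\<Sum>(a, b)\<leftarrow>\<Delta> u. F a b))"
    using linear_Delta_sum[OF F] by (simp add: Vector_Spaces.linear_iff)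
  also have "\<dots> = (\<Sum>(u, v)\<leftarrow>\<Delta> 1. \<Sum>(a, b)\<leftarrow>\<Delta> u. scV (\<epsilon> (h * v)) (F a b))"
    by (simp add: linear_sum_list_pairs[OF V.linear_scale_self])
  also have "\<dots> = (\<Sum>(u, v)\<leftarrow>\<Delta> 1. \<Sum>(a, b)\<leftarrow>\<Delta> 1. scV (\<epsilon> (h * b)) (F u (v * a)))"
    by (rule Delta2_one_snd_sum[where scV = scV]) (intro trilinear_mapI intros)
  also have "\<dots> = (\<Sum>(u, v)\<leftarrow>\<Delta> 1. \<Sum>(a, b)\<leftarrow>\<Delta> 1. F u (v * sc (\<epsilon> (h * b)) a))"
    using F_snd by (simp add: Vector_Spaces.linear_iff)
  also have "\<dots> = (\<Sum>(u, v)\<leftarrow>\<Delta> 1. F u (v * source_counit h))"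
    by (simp add: source_counit_def antipode_right linear_sum_list_pairs[OF F_snd])
  finally show ?thesis .
qed

lemma comult_mult_antipode:
  assumes F: "bilinear_map sc scV F"
  shows "(\<Sum>(a, b)\<leftarrow>\<Delta> x. F (a * y) b) = (\<Sum>(c, d)\<leftarrow>\<Delta> y. \<Sum>(a, b)\<leftarrow>\<Delta> (x * c). F a (b * S d))"
proof -
  interpret V: vector_space scV using F by (rule bilinear_map_vector_space)
  note intros = linear_H_intros V.vector_space_axioms bilinear_map_linear_fst[OF F] bilinear_map_linear_snd[OF F]
  define G where "G u z = (\<Sum>(a, b)\<leftarrow>\<Delta> x. F (a * u) (b * z))" for u z
  have G_snd: "Vector_Spaces.linear sc scV (G u)" for u
    unfolding G_def by (intro intros)
  have "(\<Sum>(a, b)\<leftarrow>\<Delta> x. F (a * y) b) = (\<Sum>(a, b)\<leftarrow>\<Delta> (x * 1). F (a * y) b)"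
    by simp
  also have "\<dots> = (\<Sum>(p, q)\<leftarrow>\<Delta> 1. G (p * y) q)"
    unfolding G_def
    by (subst Delta_mult_sum[where scV = scV]) (intro bilinear_mapI intros, subst sum_list_pairs_swap, simp add: mult.assoc)
  also have "\<dots> = (\<Sum>(u, v)\<leftarrow>\<Delta> y. G u (target_counit v))"
    by (rule comult_target_counit[where scV = scV, symmetric]) (unfold G_def, intro bilinear_mapI intros)
  also have "\<dots> = (\<Sum>(u, v)\<leftarrow>\<Delta> y. \<Sum>(c, d)\<leftarrow>\<Delta> v. G u (c * S d))"
    by (simp add: target_counit_def linear_sum_list_pairs[OF G_snd])
  also have "\<dots> = (\<Sum>(c, d)\<leftarrow>\<Delta> y. \<Sum>(u, v)\<leftarrow>\<Delta> c. G u (v * S d))"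
    by (rule coassoc_sum[where scV = scV, symmetric]) (unfold G_def, intro trilinear_mapI intros)
  also have "\<dots> = (\<Sum>(c, d)\<leftarrow>\<Delta> y. \<Sum>(a, b)\<leftarrow>\<Delta> (x * c). F a (b * S d))"
  proof -
    have "(\<Sum>(a, b)\<leftarrow>\<Delta> (x * c). F a (b * S d)) = (\<Sum>(u, v)\<leftarrow>\<Delta> c. G u (v * S d))" for c d
      unfolding G_def
      by (subst Delta_mult_sum[where scV = scV])
        (intro bilinear_mapI intros, subst sum_list_pairs_swap, simp add: mult.assoc)
    then show ?thesis by simp
  qed
  finally show ?thesis .
qed

lemma comult_antipode:
  assumes F: "bilinear_map sc scV F"
  shows "(\<Sum>(a, b)\<leftarrow>\<Delta> h. \<Sum>(c, d)\<leftarrow>\<Delta> (S a). F (c * b) d) = (\<Sum>(a, b)\<leftarrow>\<Delta> 1. F a (b * S h))"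
proof -
  interpret V: vector_space scV using F by (rule bilinear_map_vector_space)
  note intros = linear_H_intros V.vector_space_axioms bilinear_map_linear_fst[OF F] bilinear_map_linear_snd[OF F]
  define R where "R x y z = (\<Sum>(a, b)\<leftarrow>\<Delta> (S x * y). F a (b * S z))" for x y z
  have F_S: "bilinear_map sc scV (\<lambda>a b. F a (b * S z))" for z
    by (intro bilinear_mapI intros)
  have "(\<Sum>(a, b)\<leftarrow>\<Delta> h. \<Sum>(c, d)\<leftarrow>\<Delta> (S a). F (c * b) d) = (\<Sum>(a, b)\<leftarrow>\<Delta> h. \<Sum>(c, d)\<leftarrow>\<Delta> b. R a c d)"
    unfolding R_def by (simp add: comult_mult_antipode[OF F])
  also have "\<dots> = (\<Sum>(a, d)\<leftarrow>\<Delta> h. \<Sum>(x, c)\<leftarrow>\<Delta> a. R x c d)"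
    by (rule coassoc_sum[where scV = scV, symmetric]) (unfold R_def, intro trilinear_mapI intros F_S)
  also have "\<dots> = (\<Sum>(a, d)\<leftarrow>\<Delta> h. \<Sum>(u, v)\<leftarrow>\<Delta> (source_counit a). F u (v * S d))"
    by (simp add: R_def source_counit_def linear_sum_list_pairs[OF linear_Delta_sum[OF F_S]])
  also have "\<dots> = (\<Sum>(a, d)\<leftarrow>\<Delta> h. \<Sum>(u, v)\<leftarrow>\<Delta> 1. F u (v * (source_counit a * S d)))"
    by (simp add: comult_source_counit[OF F_S] mult.assoc)
  also have "\<dots> = (\<Sum>(u, v)\<leftarrow>\<Delta> 1. F u (v * S h))"
    by (subst sum_list_pairs_swap)
      (simp add: antipode_eq_source_counit_sum[of h] linear_sum_list_pairs[OF bilinear_map_linear_snd[OF F]] intros)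
  finally show ?thesis .
qed

end

locale symmetric_partial_module = weak_hopf sc \<Delta> \<epsilon> S
  for sc :: "'k::field \<Rightarrow> 'h::ring_1 \<Rightarrow> 'h" and \<Delta> \<epsilon> S +
  fixes scA :: "'k::field \<Rightarrow> 'a::ring_1 \<Rightarrow> 'a"
    and act :: "'h \<Rightarrow> 'a \<Rightarrow> 'a"
  assumes vector_space_A: "vector_space scA"
    and scaleA_mult_left: "scA c (x * y) = scA c x * y"
    and scaleA_mult_right: "scA c (x * y) = x * scA c y"
    and linear_act: "Vector_Spaces.linear scA scA (act h)"
    and linear_act_fst: "Vector_Spaces.linear sc scA (\<lambda>h. act h x)"
    and act_mult: "act h (x * y) = (\<Sum>(a, b)\<leftarrow>\<Delta> h. act a x * act b y)"
    and act_one: "act 1 x = x"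
    and act_act_left: "act h (act k x) = (\<Sum>(a, b)\<leftarrow>\<Delta> h. act a 1 * act (b * k) x)"
    and act_act_right: "act h (act k x) = (\<Sum>(a, b)\<leftarrow>\<Delta> h. act (a * k) x * act b 1)"

lemma symmetric_partial_module_algebra_imp_symmetric_partial_module:
  "weak_hopf_algebra sc \<Delta> \<epsilon> S \<Longrightarrow> symmetric_partial_module_algebra sc \<Delta> scA act \<Longrightarrow>
   symmetric_partial_module sc \<Delta> \<epsilon> S scA act"
  unfolding symmetric_partial_module_def symmetric_partial_module_axioms_def
    symmetric_partial_module_algebra_def k_algebra_def
  by (blast intro: weak_hopf_algebra_imp_weak_hopf)

context symmetric_partial_module
begin

lemma linear_A_mult_left: "Vector_Spaces.linear scA scA (\<lambda>z. y * z)"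
  using vector_space_A by (simp add: Vector_Spaces.linear_iff distrib_left scaleA_mult_right)

lemma linear_A_mult_right: "Vector_Spaces.linear scA scA (\<lambda>z. z * y)"
  using vector_space_A by (simp add: Vector_Spaces.linear_iff distrib_right scaleA_mult_left)

lemmas linear_A_intros = linear_H_intros vector_space_A
  linear_compose_fun[OF _ linear_act_fst] linear_compose_fun[OF _ linear_act]
  linear_compose_fun[OF _ linear_A_mult_left] linear_compose_fun[OF _ linear_A_mult_right]

lemma Delta_one_act_act_fst:
  assumes G_fst: "\<And>v. Vector_Spaces.linear scA scA (\<lambda>z. G z v)"
    and G_snd: "\<And>z. Vector_Spaces.linear sc scA (\<lambda>v. G z v)"
  shows "(\<Sum>(u, v)\<leftarrow>\<Delta> 1. G (act u (act h x)) v) = (\<Sum>(u, v)\<leftarrow>\<Delta> 1. G (act (u * h) x) v)"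
proof -
  note intros = linear_A_intros linear_compose_fun[OF _ G_fst] linear_compose_fun[OF _ G_snd]
  have "(\<Sum>(u, v)\<leftarrow>\<Delta> 1. G (act u (act h x)) v)
      = (\<Sum>(u, v)\<leftarrow>\<Delta> 1. \<Sum>(c, d)\<leftarrow>\<Delta> u. G (act c 1 * act (d * h) x) v)"
    by (simp add: act_act_left linear_sum_list_pairs[OF G_fst])
  also have "\<dots> = (\<Sum>(u, v)\<leftarrow>\<Delta> 1. \<Sum>(c, d)\<leftarrow>\<Delta> 1. G (act u 1 * act (v * c * h) x) d)"
    by (rule Delta2_one_snd_sum[where scV = scA]) (intro trilinear_mapI intros)
  also have "\<dots> = (\<Sum>(c, d)\<leftarrow>\<Delta> 1. \<Sum>(u, v)\<leftarrow>\<Delta> 1. G (act u 1 * act (v * (c * h)) x) d)"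
    by (subst sum_list_pairs_swap) (simp add: mult.assoc)
  also have "\<dots> = (\<Sum>(c, d)\<leftarrow>\<Delta> 1. G (act 1 (act (c * h) x)) d)"
    by (simp add: act_act_left linear_sum_list_pairs[OF G_fst])
  finally show ?thesis by (simp add: act_one)
qed

lemma Delta_one_act_act_snd:
  assumes G_fst: "\<And>z. Vector_Spaces.linear sc scA (\<lambda>u. G u z)"
    and G_snd: "\<And>u. Vector_Spaces.linear scA scA (\<lambda>z. G u z)"
  shows "(\<Sum>(u, v)\<leftarrow>\<Delta> 1. G u (act v (act k x))) = (\<Sum>(u, v)\<leftarrow>\<Delta> 1. G u (act (v * k) x))"
proof -
  note intros = linear_A_intros linear_compose_fun[OF _ G_fst] linear_compose_fun[OF _ G_snd]
  have "(\<Sum>(u, v)\<leftarrow>\<Delta> 1. G u (act v (act k x)))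
      = (\<Sum>(u, v)\<leftarrow>\<Delta> 1. \<Sum>(c, d)\<leftarrow>\<Delta> v. G u (act (c * k) x * act d 1))"
    by (simp add: act_act_right linear_sum_list_pairs[OF G_snd])
  also have "\<dots> = (\<Sum>(a, b)\<leftarrow>\<Delta> 1. \<Sum>(c, d)\<leftarrow>\<Delta> a. G c (act (d * k) x * act b 1))"
    by (rule coassoc_sum[where scV = scA, symmetric]) (intro trilinear_mapI intros)
  also have "\<dots> = (\<Sum>(a, b)\<leftarrow>\<Delta> 1. \<Sum>(c, d)\<leftarrow>\<Delta> 1. G c (act (a * d * k) x * act b 1))"
    by (rule Delta2_one_fst_sum[where scV = scA]) (intro trilinear_mapI intros)
  also have "\<dots> = (\<Sum>(c, d)\<leftarrow>\<Delta> 1. \<Sum>(a, b)\<leftarrow>\<Delta> 1. G c (act (a * (d * k)) x * act b 1))"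
    by (subst sum_list_pairs_swap) (simp add: mult.assoc)
  also have "\<dots> = (\<Sum>(c, d)\<leftarrow>\<Delta> 1. G c (act 1 (act (d * k) x)))"
    by (simp add: act_act_right linear_sum_list_pairs[OF G_snd])
  finally show ?thesis by (simp add: act_one)
qed

lemma act_one_mult: "act a 1 * y = (\<Sum>(u, v)\<leftarrow>\<Delta> 1. act (u * a) 1 * act v y)"
proof -
  have "act a 1 * y = act 1 (act a 1 * y)"
    by (simp add: act_one)
  also have "\<dots> = (\<Sum>(u, v)\<leftarrow>\<Delta> 1. act u (act a 1) * act v y)"
    by (rule act_mult)
  also have "\<dots> = (\<Sum>(u, v)\<leftarrow>\<Delta> 1. act (u * a) 1 * act v y)"
    by (rule Delta_one_act_act_fst) (intro linear_A_mult_right, intro linear_A_intros)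
  finally show ?thesis .
qed

lemma act_act_antipode: "(\<Sum>(a, b)\<leftarrow>\<Delta> h. act a (act (S b) y)) = act h 1 * y"
proof -
  have lin: "Vector_Spaces.linear sc scA (\<lambda>z. act a 1 * act z y)" for a
    by (intro linear_A_intros)
  have "(\<Sum>(a, b)\<leftarrow>\<Delta> h. act a (act (S b) y))
      = (\<Sum>(a, b)\<leftarrow>\<Delta> h. \<Sum>(c, d)\<leftarrow>\<Delta> a. act c 1 * act (d * S b) y)"
    by (simp add: act_act_left)
  also have "\<dots> = (\<Sum>(a, b)\<leftarrow>\<Delta> h. \<Sum>(c, d)\<leftarrow>\<Delta> b. act a 1 * act (c * S d) y)"
    by (rule coassoc_sum[where scV = scA]) (intro trilinear_mapI linear_A_intros)
  also have "\<dots> = (\<Sum>(a, b)\<leftarrow>\<Delta> h. act a 1 * act (target_counit b) y)"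
    by (simp add: target_counit_def linear_sum_list_pairs[OF lin])
  also have "\<dots> = (\<Sum>(u, v)\<leftarrow>\<Delta> 1. act (u * h) 1 * act v y)"
    by (rule comult_target_counit[where scV = scA]) (intro bilinear_mapI linear_A_intros)
  also have "\<dots> = act h 1 * y"
    by (rule act_one_mult[symmetric])
  finally show ?thesis .
qed

lemma act_antipode_act: "(\<Sum>(a, b)\<leftarrow>\<Delta> h. act (S a) (act b y)) = (\<Sum>(u, v)\<leftarrow>\<Delta> 1. act u y * act (v * S h) 1)"
proof -
  have "(\<Sum>(a, b)\<leftarrow>\<Delta> h. act (S a) (act b y))
      = (\<Sum>(a, b)\<leftarrow>\<Delta> h. \<Sum>(c, d)\<leftarrow>\<Delta> (S a). act (c * b) y * act d 1)"
    by (simp add: act_act_right)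
  also have "\<dots> = (\<Sum>(u, v)\<leftarrow>\<Delta> 1. act u y * act (v * S h) 1)"
    by (rule comult_antipode[where scV = scA]) (intro bilinear_mapI linear_A_intros)
  finally show ?thesis .
qed

lemma PR2: "(\<Sum>(a, b)\<leftarrow>\<Delta> k. act h (act a (act (S b) x))) = (\<Sum>(a, b)\<leftarrow>\<Delta> k. act (h * a) (act (S b) x))"
proof -
  have "(\<Sum>(a, b)\<leftarrow>\<Delta> k. act h (act a (act (S b) x))) = act h (act k 1 * x)"
    by (simp add: linear_sum_list_pairs[OF linear_act, symmetric] act_act_antipode)
  also have "\<dots> = (\<Sum>(a, b)\<leftarrow>\<Delta> h. \<Sum>(c, d)\<leftarrow>\<Delta> a. act (c * k) 1 * act d 1 * act b x)"
    by (simp add: act_mult act_act_right linear_sum_list_pairs[OF linear_A_mult_right])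
  also have "\<dots> = (\<Sum>(a, b)\<leftarrow>\<Delta> h. \<Sum>(c, d)\<leftarrow>\<Delta> b. act (a * k) 1 * act c 1 * act d x)"
    by (rule coassoc_sum[where scV = scA]) (intro trilinear_mapI linear_A_intros)
  also have "\<dots> = (\<Sum>(a, b)\<leftarrow>\<Delta> h. act (a * k) 1 * act b x)"
    using act_mult[of _ 1 x, symmetric]
    by (simp add: linear_sum_list_pairs[OF linear_A_mult_left, symmetric] mult.assoc)
  also have "\<dots> = (\<Sum>(c, d)\<leftarrow>\<Delta> k. \<Sum>(a, b)\<leftarrow>\<Delta> (h * c). act a 1 * act (b * S d) x)"
    by (rule comult_mult_antipode[where scV = scA]) (intro bilinear_mapI linear_A_intros)
  also have "\<dots> = (\<Sum>(a, b)\<leftarrow>\<Delta> k. act (h * a) (act (S b) x))"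
    by (simp add: act_act_left)
  finally show ?thesis .
qed

lemma PR3: "(\<Sum>(a, b)\<leftarrow>\<Delta> k. act h (act (S a) (act b x))) = (\<Sum>(a, b)\<leftarrow>\<Delta> k. act (h * S a) (act b x))"
proof -
  have "(\<Sum>(u, v)\<leftarrow>\<Delta> 1. act u x * act v (act (S k) 1)) = (\<Sum>(u, v)\<leftarrow>\<Delta> 1. act u x * act (v * S k) 1)"
    by (rule Delta_one_act_act_snd) (intro linear_A_intros, rule linear_A_mult_left)
  then have x_antipode: "(\<Sum>(u, v)\<leftarrow>\<Delta> 1. act u x * act (v * S k) 1) = x * act (S k) 1"
    by (simp add: act_mult[symmetric] act_one)
  have bilinear_mult: "bilinear_map sc scA (\<lambda>s t. act (p * s) x * act (q * t) 1)" for p q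
    by (intro bilinear_mapI linear_A_intros)
  have bilinear_mult_right: "bilinear_map sc scA (\<lambda>s t. act (s * b) x * act t 1)" for b
    by (intro bilinear_mapI linear_A_intros)
  have "(\<Sum>(a, b)\<leftarrow>\<Delta> k. act h (act (S a) (act b x))) = act h (x * act (S k) 1)"
    by (simp add: linear_sum_list_pairs[OF linear_act, symmetric] act_antipode_act x_antipode)
  also have "\<dots> = (\<Sum>(a, b)\<leftarrow>\<Delta> h. \<Sum>(c, d)\<leftarrow>\<Delta> b. act a x * (act c 1 * act (d * S k) 1))"
    by (simp add: act_mult act_act_left linear_sum_list_pairs[OF linear_A_mult_left])
  also have "\<dots> = (\<Sum>(a, b)\<leftarrow>\<Delta> h. \<Sum>(c, d)\<leftarrow>\<Delta> a. act c x * (act d 1 * act (b * S k) 1))"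
    by (rule coassoc_sum[where scV = scA, symmetric]) (intro trilinear_mapI linear_A_intros)
  also have "\<dots> = (\<Sum>(a, b)\<leftarrow>\<Delta> h. act a x * act (b * S k) 1)"
    using act_mult[of _ x 1, symmetric]
    by (simp add: linear_sum_list_pairs[OF linear_A_mult_right, symmetric] mult.assoc[symmetric])
  also have "\<dots> = (\<Sum>(a, b)\<leftarrow>\<Delta> (h * 1). act a x * act (b * S k) 1)"
    by simp
  also have "\<dots> = (\<Sum>(p, q)\<leftarrow>\<Delta> h. \<Sum>(u, v)\<leftarrow>\<Delta> 1. act (p * u) x * act (q * v * S k) 1)"
    by (rule Delta_mult_sum[where scV = scA]) (intro bilinear_mapI linear_A_intros)
  also have "\<dots> = (\<Sum>(p, q)\<leftarrow>\<Delta> h. \<Sum>(a, b)\<leftarrow>\<Delta> k. \<Sum>(c, d)\<leftarrow>\<Delta> (S a). act (p * (c * b)) x * act (q * d) 1)"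
    by (simp add: comult_antipode[OF bilinear_mult] mult.assoc)
  also have "\<dots> = (\<Sum>(a, b)\<leftarrow>\<Delta> k. \<Sum>(c, d)\<leftarrow>\<Delta> (h * S a). act (c * b) x * act d 1)"
    by (subst sum_list_pairs_swap) (simp add: Delta_mult_sum[OF bilinear_mult_right] mult.assoc)
  also have "\<dots> = (\<Sum>(a, b)\<leftarrow>\<Delta> k. act (h * S a) (act b x))"
    by (simp add: act_act_right)
  finally show ?thesis .
qed

lemma PR4: "(\<Sum>(a, b)\<leftarrow>\<Delta> h. act a (act (S b) (act k x))) = (\<Sum>(a, b)\<leftarrow>\<Delta> h. act a (act (S b * k) x))"
proof -
  have lin: "Vector_Spaces.linear sc scA (\<lambda>z. act a 1 * act (z * k) x)" for a
    by (intro linear_A_intros)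
  have "(\<Sum>(a, b)\<leftarrow>\<Delta> h. act a (act (S b) (act k x))) = act h 1 * act k x"
    by (rule act_act_antipode)
  also have "\<dots> = (\<Sum>(u, v)\<leftarrow>\<Delta> 1. act (u * h) 1 * act v (act k x))"
    by (rule act_one_mult)
  also have "\<dots> = (\<Sum>(u, v)\<leftarrow>\<Delta> 1. act (u * h) 1 * act (v * k) x)"
    by (rule Delta_one_act_act_snd) (intro linear_A_intros, rule linear_A_mult_left)
  also have "\<dots> = (\<Sum>(a, b)\<leftarrow>\<Delta> h. act a 1 * act (target_counit b * k) x)"
    by (rule comult_target_counit[where scV = scA, symmetric]) (intro bilinear_mapI linear_A_intros)
  also have "\<dots> = (\<Sum>(a, b)\<leftarrow>\<Delta> h. \<Sum>(c, d)\<leftarrow>\<Delta> b. act a 1 * act (c * (S d * k)) x)"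
    by (simp add: target_counit_def linear_sum_list_pairs[OF lin] mult.assoc)
  also have "\<dots> = (\<Sum>(a, b)\<leftarrow>\<Delta> h. act a (act (S b * k) x))"
    by (simp add: act_act_left coassoc_sum[where scV = scA] trilinear_mapI linear_A_intros)
  finally show ?thesis .
qed

lemma PR5: "(\<Sum>(a, b)\<leftarrow>\<Delta> h. act (S a) (act b (act k x))) = (\<Sum>(a, b)\<leftarrow>\<Delta> h. act (S a) (act (b * k) x))"
proof -
  have "(\<Sum>(a, b)\<leftarrow>\<Delta> h. act (S a) (act b (act k x))) = (\<Sum>(u, v)\<leftarrow>\<Delta> 1. act u (act k x) * act (v * S h) 1)"
    by (rule act_antipode_act)
  also have "\<dots> = (\<Sum>(u, v)\<leftarrow>\<Delta> 1. act (u * k) x * act (v * S h) 1)"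
    by (rule Delta_one_act_act_fst) (rule linear_A_mult_right, intro linear_A_intros)
  also have "\<dots> = (\<Sum>(a, b)\<leftarrow>\<Delta> h. \<Sum>(c, d)\<leftarrow>\<Delta> (S a). act (c * b * k) x * act d 1)"
    by (rule comult_antipode[where scV = scA, symmetric]) (intro bilinear_mapI linear_A_intros)
  also have "\<dots> = (\<Sum>(a, b)\<leftarrow>\<Delta> h. act (S a) (act (b * k) x))"
    by (simp add: act_act_right mult.assoc)
  finally show ?thesis .
qed

lemma PR6: "act h x = (\<Sum>(a, b, c)\<leftarrow>delta2_left \<Delta> h. act a (act (S b) (act c x)))"
proof -
  have "(\<Sum>(a, b, c)\<leftarrow>delta2_left \<Delta> h. act a (act (S b) (act c x)))
      = (\<Sum>(d, c)\<leftarrow>\<Delta> h. \<Sum>(a, b)\<leftarrow>\<Delta> d. act a (act (S b) (act c x)))"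
    by (simp add: delta2_left_def sum_list_map_concat comp_def case_prod_beta')
  also have "\<dots> = (\<Sum>(d, c)\<leftarrow>\<Delta> h. act d 1 * act c x)"
    by (simp add: act_act_antipode)
  also have "\<dots> = act h x"
    using act_mult[of h 1 x] by simp
  finally show ?thesis by simp
qed

lemma partial_representation: "partial_representation_End sc \<Delta> S scA act"
  unfolding partial_representation_End_def
  using linear_act linear_act_fst act_one PR2 PR3 PR4 PR5 PR6 by blast

end

theorem proposition3p5:
  fixes sc :: "'k::field \<Rightarrow> 'h::ring_1 \<Rightarrow> 'h"
    and \<Delta> :: "'h \<Rightarrow> ('h \<times> 'h) list"
    and \<epsilon> :: "'h \<Rightarrow> 'k"
    and S :: "'h \<Rightarrow> 'h"
    and scA :: "'k \<Rightarrow> 'a::ring_1 \<Rightarrow> 'a"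
    and act :: "'h \<Rightarrow> 'a \<Rightarrow> 'a"
  assumes "weak_hopf_algebra sc \<Delta> \<epsilon> S"
    and "symmetric_partial_module_algebra sc \<Delta> scA act"
  shows "partial_representation_End sc \<Delta> S scA (\<lambda>h a. act h a)"
proof -
  interpret symmetric_partial_module sc \<Delta> \<epsilon> S scA act
    using assms by (rule symmetric_partial_module_algebra_imp_symmetric_partial_module)
  show ?thesis
    using partial_representation by simp
qed

end
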